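(* Let $A\in\mathbb{C}^{n\times n}$, $\lambda\in\mathbb{C}$ a simple eigenvalue of $A$, $v\in\mathbb{C}^n\setminus\{0\}$ with $Av=\lambda v$ and $u\in\mathbb{C}^n\setminus\{0\}$ with $A^*u=\bar\lambda u$. Then $\frac{\|u\|\,\|v\|}{|\langle u,v\rangle|}\le\sqrt{1+\mu(A,\lambda,v)^2}$.
   Context: For $v\ne0$, $T_v=v^\perp\subset\mathbb{C}^n$, $P_{v^\perp}$ the orthogonal projection onto $T_v$, $A_{\lambda,v}=P_{v^\perp}(A-\lambda\mathrm{Id})|_{T_v}:T_v\to T_v$, and $\mu(A,\lambda,v)=\|A\|_F\|A_{\lambda,v}^{-1}\|$ (Frobenius norm times operator norm). The quantity $\|u\|\|v\|/|\langle u,v\rangle|$ is the eigenvalue condition number $\mu_\lambda(A,\lambda,v)$. *)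

theory Defs
  imports "HOL-Analysis.Analysis" "HOL-Computational_Algebra.Polynomial"
begin

text \<open>Complex n-space is \<open>complex ^ 'n\<close>, n x n complex matrices are \<open>complex ^ 'n ^ 'n\<close>.
  The library norm on \<open>complex ^ 'n\<close> is the Euclidean (2-)norm.\<close>

definition cinner :: "complex ^ 'n \<Rightarrow> complex ^ 'n \<Rightarrow> complex" where
  "cinner u v = (\<Sum>i\<in>UNIV. cnj (u $ i) * v $ i)"

definition adjoint_mat :: "complex ^ 'n ^ 'n \<Rightarrow> complex ^ 'n ^ 'n" where
  "adjoint_mat A = (\<chi> i j. cnj (A $ j $ i))"

definition charpoly :: "complex ^ 'n ^ 'n \<Rightarrow> complex poly" where
  "charpoly A = det (\<chi> i j. (if i = j then [:0, 1:] else 0) - [:A $ i $ j:])"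

definition simple_eigenvalue :: "complex ^ 'n ^ 'n \<Rightarrow> complex \<Rightarrow> bool" where
  "simple_eigenvalue A lam \<longleftrightarrow> order lam (charpoly A) = 1"

definition frob_norm :: "complex ^ 'n ^ 'n \<Rightarrow> real" where
  "frob_norm A = sqrt (\<Sum>i\<in>UNIV. \<Sum>j\<in>UNIV. (cmod (A $ i $ j))\<^sup>2)"

definition orth_compl :: "complex ^ 'n \<Rightarrow> (complex ^ 'n) set" where
  "orth_compl v = {w. cinner v w = 0}"

definition proj_orth :: "complex ^ 'n \<Rightarrow> complex ^ 'n \<Rightarrow> complex ^ 'n" where
  "proj_orth v w = w - (cinner v w / cinner v v) *s v"

definition A_lam_v :: "complex ^ 'n ^ 'n \<Rightarrow> complex \<Rightarrow> complex ^ 'n \<Rightarrow> complex ^ 'n \<Rightarrow> complex ^ 'n" where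
  "A_lam_v A lam v w = proj_orth v ((A - mat lam) *v w)"

text \<open>The inverse of A_{\<lambda>,v} as a map T_v \<rightarrow> T_v (extended by 0 outside T_v
  to make it unique).\<close>
definition A_lam_v_inv :: "complex ^ 'n ^ 'n \<Rightarrow> complex \<Rightarrow> complex ^ 'n \<Rightarrow> complex ^ 'n \<Rightarrow> complex ^ 'n" where
  "A_lam_v_inv A lam v = (THE B.
      (\<forall>w\<in>orth_compl v. B w \<in> orth_compl v \<and> A_lam_v A lam v (B w) = w \<and> B (A_lam_v A lam v w) = w)
      \<and> (\<forall>w. w \<notin> orth_compl v \<longrightarrow> B w = 0))"

definition opnorm_on :: "(complex ^ 'n) set \<Rightarrow> (complex ^ 'n \<Rightarrow> complex ^ 'n) \<Rightarrow> real" where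
  "opnorm_on T B = Sup {norm (B w) | w. w \<in> T \<and> norm w \<le> 1}"

definition mu :: "complex ^ 'n ^ 'n \<Rightarrow> complex \<Rightarrow> complex ^ 'n \<Rightarrow> real" where
  "mu A lam v = frob_norm A * opnorm_on (orth_compl v) (A_lam_v_inv A lam v)"

end

theory Submission
  imports Defs
begin

text \<open>Write \<open>u = a v + w\<close> with \<open>w \<bottom> v\<close>, so that \<open>\<parallel>u\<parallel>\<^sup>2 = |a|\<^sup>2\<parallel>v\<parallel>\<^sup>2 + \<parallel>w\<parallel>\<^sup>2\<close> and
  \<open>|\<langle>u,v\<rangle>| = |a| \<parallel>v\<parallel>\<^sup>2\<close>; it suffices to show \<open>\<parallel>w\<parallel> \<le> |a| \<parallel>v\<parallel> \<mu>(A,\<lambda>,v)\<close>.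
  Let \<open>z = A\<^sub>\<lambda>\<^sub>,\<^sub>v\<^sup>-\<^sup>1 w \<in> v\<^sup>\<bottom>\<close>. Since \<open>w \<bottom> v\<close> and \<open>u\<close> is a left eigenvector,
  \<open>\<parallel>w\<parallel>\<^sup>2 = \<langle>w, (A - \<lambda>) z\<rangle> = \<langle>u - a v, (A - \<lambda>) z\<rangle> = - cnj a \<langle>v, A z\<rangle>\<close>, which is at most
  \<open>|a| \<parallel>v\<parallel> \<parallel>A\<parallel>\<^sub>F \<parallel>A\<^sub>\<lambda>\<^sub>,\<^sub>v\<^sup>-\<^sup>1\<parallel> \<parallel>w\<parallel>\<close>.

  Simplicity of \<open>\<lambda>\<close> is what makes \<open>A\<^sub>\<lambda>\<^sub>,\<^sub>v\<close> invertible: a nonzero \<open>z \<bottom> v\<close> in its kernel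
  satisfies \<open>A z = \<lambda> z + c v\<close>, and in a basis beginning with \<open>v, z\<close> the characteristic matrix has
  two rows that make \<open>(X - \<lambda>)\<^sup>2\<close> divide the characteristic polynomial.\<close>

section \<open>The Hermitian inner product\<close>

lemma norm_vec_square: "(norm (x::complex^'n))\<^sup>2 = (\<Sum>i\<in>UNIV. (cmod (x$i))\<^sup>2)"
  unfolding norm_vec_def L2_set_def by (simp add: sum_nonneg)

lemma cinner_self: "cinner x x = complex_of_real ((norm x)\<^sup>2)"
  unfolding norm_vec_square cinner_def of_real_sum
  by (rule sum.cong) (auto simp: complex_norm_square mult.commute simp flip: of_real_power)

lemma cinner_self_eq_0 [simp]: "cinner x x = 0 \<longleftrightarrow> x = 0"
  by (simp add: cinner_self)

lemma cinner_add_right: "cinner x (y + z) = cinner x y + cinner x z"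
  by (simp add: cinner_def distrib_left sum.distrib)

lemma cinner_diff_right: "cinner x (y - z) = cinner x y - cinner x z"
  by (simp add: cinner_def right_diff_distrib sum_subtractf)

lemma cinner_scale_right: "cinner x (c *s y) = c * cinner x y"
  by (simp add: cinner_def sum_distrib_left algebra_simps)

lemma cinner_add_left: "cinner (x + y) z = cinner x z + cinner y z"
  by (simp add: cinner_def distrib_right sum.distrib)

lemma cinner_diff_left: "cinner (x - y) z = cinner x z - cinner y z"
  by (simp add: cinner_def left_diff_distrib sum_subtractf)

lemma cinner_scale_left: "cinner (c *s x) y = cnj c * cinner x y"
  by (simp add: cinner_def sum_distrib_left algebra_simps)

lemma cinner_commute: "cinner y x = cnj (cinner x y)"
  by (simp add: cinner_def mult.commute)

lemma cinner_zero_left [simp]: "cinner 0 x = 0"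
  by (simp add: cinner_def)

lemma cinner_zero_right [simp]: "cinner x 0 = 0"
  by (simp add: cinner_def)

lemma cinner_Cauchy_Schwarz: "cmod (cinner x y) \<le> norm x * norm y"
proof -
  have "cmod (cinner x y) \<le> (\<Sum>i\<in>UNIV. cmod (cnj (x$i) * y$i))"
    unfolding cinner_def by (rule norm_sum)
  also have "\<dots> = (\<Sum>i\<in>UNIV. \<bar>cmod (x$i)\<bar> * \<bar>cmod (y$i)\<bar>)"
    by (simp add: norm_mult)
  also have "\<dots> \<le> L2_set (\<lambda>i. cmod (x$i)) UNIV * L2_set (\<lambda>i. cmod (y$i)) UNIV"
    by (rule L2_set_mult_ineq)
  finally show ?thesis by (simp add: norm_vec_def)
qed

lemma cinner_Pythagoras:
  assumes "cinner x y = 0"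
  shows "(norm (x + y))\<^sup>2 = (norm x)\<^sup>2 + (norm (y::complex^'n))\<^sup>2"
proof -
  have "cinner y x = 0" using assms by (simp add: cinner_commute[of y x])
  then have "cinner (x + y) (x + y) = cinner x x + cinner y y"
    by (simp add: cinner_add_left cinner_add_right assms)
  then have "complex_of_real ((norm (x + y))\<^sup>2) = complex_of_real ((norm x)\<^sup>2 + (norm y)\<^sup>2)"
    by (simp add: cinner_self del: of_real_power)
  then show ?thesis using of_real_eq_iff by blast
qed

lemma norm_vector_smult: "norm (c *s (x::complex^'n)) = cmod c * norm x"
proof -
  have "(norm (c *s x))\<^sup>2 = (cmod c * norm x)\<^sup>2"
    unfolding norm_vec_square power_mult_distrib by (simp add: norm_mult power_mult_distrib sum_distrib_left)
  then show ?thesis by (simp add: power2_eq_iff_nonneg)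
qed

lemma frob_norm_nonneg: "0 \<le> frob_norm M"
  by (simp add: frob_norm_def sum_nonneg)

lemma norm_matrix_vector_mult_le: "norm (M *v x) \<le> frob_norm M * norm (x::complex^'n)"
proof -
  have row: "(cmod ((M *v x)$i))\<^sup>2 \<le> (\<Sum>j\<in>UNIV. (cmod (M$i$j))\<^sup>2) * (norm x)\<^sup>2" for i
  proof -
    have "cmod ((M *v x)$i) \<le> (\<Sum>j\<in>UNIV. cmod (M$i$j * x$j))"
      unfolding matrix_vector_mult_def by (simp add: norm_sum)
    also have "\<dots> = (\<Sum>j\<in>UNIV. \<bar>cmod (M$i$j)\<bar> * \<bar>cmod (x$j)\<bar>)"
      by (simp add: norm_mult)
    also have "\<dots> \<le> L2_set (\<lambda>j. cmod (M$i$j)) UNIV * norm x"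
      unfolding norm_vec_def by (rule L2_set_mult_ineq)
    finally have "(cmod ((M *v x)$i))\<^sup>2 \<le> (L2_set (\<lambda>j. cmod (M$i$j)) UNIV * norm x)\<^sup>2"
      by (rule power_mono) simp
    then show ?thesis
      unfolding power_mult_distrib L2_set_def by (simp add: sum_nonneg)
  qed
  have "(norm (M *v x))\<^sup>2 \<le> (\<Sum>i\<in>UNIV. (\<Sum>j\<in>UNIV. (cmod (M$i$j))\<^sup>2) * (norm x)\<^sup>2)"
    by (subst norm_vec_square) (intro sum_mono row)
  also have "\<dots> = (frob_norm M * norm x)\<^sup>2"
    unfolding frob_norm_def power_mult_distrib sum_distrib_right[symmetric] by (simp add: sum_nonneg)
  finally show ?thesis
    by (rule power2_le_imp_le) (simp add: frob_norm_nonneg)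
qed

lemma cinner_adjoint_mat: "cinner u (A *v z) = cinner (adjoint_mat A *v u) z"
proof -
  have "cinner u (A *v z) = (\<Sum>i\<in>UNIV. \<Sum>j\<in>UNIV. cnj (u$i) * (A$i$j * z$j))"
    unfolding cinner_def matrix_vector_mult_def by (simp add: sum_distrib_left)
  also have "\<dots> = (\<Sum>j\<in>UNIV. \<Sum>i\<in>UNIV. cnj (u$i) * (A$i$j * z$j))"
    by (rule sum.swap)
  also have "\<dots> = cinner (adjoint_mat A *v u) z"
    unfolding cinner_def matrix_vector_mult_def adjoint_mat_def
    by (simp add: sum_distrib_left mult.commute mult.left_commute)
  finally show ?thesis .
qed

lemma mat_vector_mult: "mat c *v z = c *s z"
  by (simp add: vec_eq_iff matrix_vector_mult_def mat_def if_distrib if_distribR cong: if_cong)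

lemma matrix_vector_mult_smult: "(M::'a::comm_ring_1^'n^'m) *v (c *s x) = c *s (M *v x)"
  by (simp add: vec_eq_iff matrix_vector_mult_def sum_distrib_left algebra_simps)

lemma cinner_left_eigenvector:
  assumes "adjoint_mat A *v u = cnj lam *s u"
  shows "cinner u ((A - mat lam) *v z) = 0"
  by (simp add: matrix_vector_mult_diff_rdistrib mat_vector_mult cinner_diff_right
      cinner_scale_right cinner_adjoint_mat assms cinner_scale_left)

section \<open>The characteristic polynomial\<close>

definition const_poly_mat :: "'a::zero^'n^'m \<Rightarrow> 'a poly^'n^'m" where
  "const_poly_mat M = (\<chi> i j. [:M$i$j:])"

lemma charpoly_eq_det: "charpoly M = det (mat [:0, 1:] - const_poly_mat M)"
  unfolding charpoly_def const_poly_mat_def mat_def by (rule arg_cong[where f = det]) (simp add: vec_eq_iff)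

lemma poly_det: "poly (det P) x = det (\<chi> i j. poly (P$i$j) x)"
  unfolding det_def by (simp add: poly_sum poly_prod)

lemma poly_charpoly: "poly (charpoly A) x = det (mat x - A)"
  unfolding charpoly_def poly_det by (rule arg_cong[where f = det]) (simp add: vec_eq_iff mat_def)

lemma poly_det_const_poly_mat: "poly (det (const_poly_mat S)) x = det S"
  by (simp add: poly_det const_poly_mat_def)

lemma const_poly_sum: "[:sum f A:] = (\<Sum>i\<in>A. [:f i:] :: 'a::comm_semiring_1 poly)"
  using smult_sum[of f A 1] by simp

lemma const_poly_mat_mult: "const_poly_mat (P ** Q) = const_poly_mat P ** const_poly_mat Q"
  by (simp add: const_poly_mat_def matrix_matrix_mult_def vec_eq_iff const_poly_sum mult.commute)

lemma mat_mult_commute: "mat c ** B = B ** (mat c :: 'a::comm_semiring_1^'n^'n)"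
  by (simp add: mat_def matrix_matrix_mult_def vec_eq_iff if_distrib if_distribR mult.commute
      cong: if_cong)

lemma matrix_diff_ldistrib: "(A::'a::ring_1^'n^'m) ** (B - C) = A ** B - A ** C"
  by (simp add: matrix_matrix_mult_def vec_eq_iff sum_subtractf right_diff_distrib)

lemma matrix_diff_rdistrib: "((B::'a::ring_1^'n^'m) - C) ** A = B ** A - C ** A"
  by (simp add: matrix_matrix_mult_def vec_eq_iff sum_subtractf left_diff_distrib)

lemma charpoly_similar:
  assumes "S ** B = A ** S" and "det S \<noteq> 0"
  shows "charpoly A = charpoly B"
proof -
  let ?X = "mat [:0, 1:] :: complex poly^'n^'n"
  have "(?X - const_poly_mat A) ** const_poly_mat S = const_poly_mat S ** (?X - const_poly_mat B)"
    unfolding matrix_diff_ldistrib matrix_diff_rdistrib mat_mult_commute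
    by (simp add: const_poly_mat_mult[symmetric] assms(1))
  then have "charpoly A * det (const_poly_mat S) = det (const_poly_mat S) * charpoly B"
    unfolding charpoly_eq_det det_mul[symmetric] by simp
  moreover have "det (const_poly_mat S) \<noteq> 0"
    using assms(2) poly_det_const_poly_mat by (metis poly_0)
  ultimately show ?thesis by (simp add: mult.commute)
qed

lemma det_ne_0_iff_inj: "det M \<noteq> 0 \<longleftrightarrow> inj ((*v) (M::'a::field^'n^'n))"
  using det_nz_iff_inj_gen[OF matrix_vector_mul_linear_gen, of M] by simp

lemma charpoly_nonzero: "charpoly (A::complex^'n^'n) \<noteq> 0"
proof
  assume "charpoly A = 0"
  define x where "x = complex_of_real (frob_norm A + 1)"
  have "inj ((*v) (mat x - A))"
  proof (rule vec.linear_inj_iff_eq_0[OF matrix_vector_mul_linear_gen, THEN iffD2], intro allI impI)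
    fix y assume "(mat x - A) *v y = 0"
    then have "x *s y = A *v y"
      by (simp add: matrix_vector_mult_diff_rdistrib mat_vector_mult)
    then have "cmod x * norm y \<le> frob_norm A * norm y"
      by (metis norm_matrix_vector_mult_le norm_vector_smult)
    moreover have "cmod x = frob_norm A + 1"
      using frob_norm_nonneg[of A] by (simp add: x_def)
    ultimately have "norm y \<le> 0" by (simp add: algebra_simps)
    then show "y = 0" by (simp add: algebra_simps)
  qed
  then have "poly (charpoly A) x \<noteq> 0"
    by (simp add: poly_charpoly det_ne_0_iff_inj)
  then show False using \<open>charpoly A = 0\<close> by simp
qed

lemma det_square_dvd_of_rows:
  fixes R :: "'a::comm_ring_1^'n^'n"
  assumes ij: "i1 \<noteq> i2" and r1: "R $ i1 = q *s axis i1 1"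
    and r2: "R $ i2 = q *s axis i2 1 + r *s axis i1 1"
  shows "q * q dvd det R"
proof -
  define R1 where "R1 = (\<chi> k. if k = i1 then axis i1 1 else R $ k)"
  have "det R = det (\<chi> k. if k = i1 then q *s axis i1 1 else R $ k)"
    using r1 by (intro arg_cong[where f = det]) (simp add: vec_eq_iff)
  also have "\<dots> = q * det R1"
    unfolding R1_def by (rule det_row_mul)
  finally have d1: "det R = q * det R1" .
  define R2 where "R2 = (\<chi> k. if k = i2 then row i2 R1 + (-r) *s row i1 R1 else row k R1)"
  have "det R2 = det R1" unfolding R2_def by (rule det_row_operation) (use ij in auto)
  then have "det R = q * det R2" using d1 by simp
  also have "R2 = (\<chi> k. if k = i2 then q *s axis i2 1 else row k R1)"
    using ij r2 by (simp add: R2_def R1_def row_def vec_eq_iff)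
  also have "det \<dots> = q * det (\<chi> k. if k = i2 then axis i2 1 else row k R1)"
    by (rule det_row_mul)
  finally show ?thesis by (simp add: mult.assoc[symmetric])
qed

lemma matrix_vector_mult_axis: "(M *v axis j 1) $ k = (M::'a::comm_ring_1^'n^'m) $ k $ j"
  by (simp add: matrix_vector_mult_def axis_def if_distrib if_distribR cong: if_cong)

lemma independent_pair_columns:
  fixes v z :: "'a::field^'n"
  assumes "vec.independent {v, z}" and "v \<noteq> z"
  obtains S i1 i2 where "det S \<noteq> 0" "i1 \<noteq> i2" "S *v axis i1 1 = v" "S *v axis i2 1 = z"
proof -
  obtain B where B: "{v, z} \<subseteq> B" "B \<subseteq> UNIV" "vec.independent B" "UNIV \<subseteq> vec.span B"
    by (rule vec.maximal_independent_subset_extend[OF subset_UNIV assms(1)])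
  have "finite B" using B(3) by (rule vec.finiteI_independent)
  moreover have "card B = CARD('n)"
    using vec.basis_card_eq_dim[OF B(2,4,3)] by (simp add: card_cart_basis)
  ultimately have "\<exists>g. bij_betw g (UNIV::'n set) B"
    by (intro finite_same_card_bij) simp_all
  then obtain g where g: "bij_betw g (UNIV::'n set) B" ..
  have "v \<in> g ` UNIV" "z \<in> g ` UNIV"
    using B(1) bij_betw_imp_surj_on[OF g] by auto
  then obtain i1 i2 where i: "g i1 = v" "g i2 = z" by blast
  define S where "S = (\<chi> i j. g j $ i)"
  have S_axis: "S *v axis j 1 = g j" for j
    by (simp add: vec_eq_iff matrix_vector_mult_axis S_def)
  have "surj ((*v) S)"
    unfolding surj_def
  proof
    fix y :: "'a^'n"
    have "y \<in> vec.span B" using B(4) by auto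
    then obtain c where "y = (\<Sum>b\<in>B. c b *s b)"
      using vec.span_finite[OF \<open>finite B\<close>] by auto
    also have "\<dots> = (\<Sum>j\<in>UNIV. c (g j) *s g j)"
      using sum.reindex_bij_betw[OF g, of "\<lambda>b. c b *s b"] by simp
    also have "\<dots> = S *v (\<chi> j. c (g j))"
      by (simp add: S_def vec_eq_iff matrix_vector_mult_def sum_component mult.commute)
    finally show "\<exists>x. y = S *v x" ..
  qed
  then have "det S \<noteq> 0"
    using vec.linear_surj_imp_inj[OF matrix_vector_mul_linear_gen] det_ne_0_iff_inj by blast
  moreover have "i1 \<noteq> i2" using i assms(2) by auto
  ultimately show ?thesis using that S_axis i by simp
qed

lemma generalized_eigenvector_square_dvd_charpoly:
  fixes A :: "complex^'n^'n"
  assumes "vec.independent {v, z}" and "v \<noteq> z"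
    and Av: "A *v v = lam *s v" and Az: "A *v z = lam *s z + c *s v"
  shows "[:-lam, 1:]^2 dvd charpoly A"
proof -
  obtain S i1 i2 where S: "det S \<noteq> 0" "i1 \<noteq> i2" "S *v axis i1 1 = v" "S *v axis i2 1 = z"
    using independent_pair_columns[OF assms(1,2)] by blast
  then obtain S' where S': "S ** S' = mat 1" "S' ** S = mat 1"
    using invertible_det_nz unfolding invertible_def by blast
  define M where "M = S' ** (A ** S)"
  have "charpoly A = charpoly M"
    by (rule charpoly_similar[OF _ S(1)]) (simp add: M_def matrix_mul_assoc S'(1))
  have S'_v: "S' *v v = axis i1 1" "S' *v z = axis i2 1"
    using S(3,4) S'(2) by (metis matrix_vector_mul_assoc matrix_vector_mul_lid)+
  have "M *v x = S' *v (A *v (S *v x))" for x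
    by (simp add: M_def matrix_vector_mul_assoc)
  then have M1: "M *v axis i1 1 = lam *s axis i1 1"
    and M2: "M *v axis i2 1 = lam *s axis i2 1 + c *s axis i1 1"
    by (simp_all add: S Av Az matrix_vector_mult_smult matrix_vector_right_distrib S'_v)
  define R where "R = transpose (mat [:0, 1:] - const_poly_mat M)"
  have R: "R $ i $ k = (if k = i then [:0, 1:] else 0) - [:(M *v axis i 1) $ k:]" for i k
    by (simp add: R_def transpose_def mat_def const_poly_mat_def matrix_vector_mult_axis)
  have "R $ i1 = [:-lam, 1:] *s axis i1 1"
    by (simp add: vec_eq_iff R M1) (simp add: axis_def)
  moreover have "R $ i2 = [:-lam, 1:] *s axis i2 1 + (-[:c:]) *s axis i1 1"
    using S(2) by (simp add: vec_eq_iff R M2) (simp add: axis_def)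
  ultimately have "[:-lam, 1:] * [:-lam, 1:] dvd det R"
    by (rule det_square_dvd_of_rows[OF S(2)])
  moreover have "det R = charpoly M"
    by (simp add: R_def charpoly_eq_det)
  ultimately show ?thesis
    using \<open>charpoly A = charpoly M\<close> by (simp only: power2_eq_square)
qed

section \<open>The restricted operator and its inverse\<close>

lemma subspace_orth_compl: "vec.subspace (orth_compl v)"
  by (auto simp: vec.subspace_def orth_compl_def cinner_add_right cinner_scale_right)

lemma proj_orth_in_orth_compl: "proj_orth v w \<in> orth_compl v"
  by (cases "v = 0") (simp_all add: orth_compl_def proj_orth_def cinner_diff_right cinner_scale_right)

lemma cinner_proj_orth_right: "cinner x v = 0 \<Longrightarrow> cinner x (proj_orth v y) = cinner x y"
  by (simp add: proj_orth_def cinner_diff_right cinner_scale_right)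

lemma A_lam_v_in_orth_compl: "A_lam_v A lam v w \<in> orth_compl v"
  by (simp add: A_lam_v_def proj_orth_in_orth_compl)

lemma proj_orth_linear: "Vector_Spaces.linear (*s) (*s) (proj_orth v)"
  unfolding Vector_Spaces.linear_iff
  by (simp add: vec.vector_space_axioms proj_orth_def cinner_add_right cinner_scale_right
      vec_eq_iff add_divide_distrib algebra_simps)

lemma A_lam_v_linear: "Vector_Spaces.linear (*s) (*s) (A_lam_v A lam v)"
proof -
  have "A_lam_v A lam v = proj_orth v \<circ> (*v) (A - mat lam)"
    by (simp add: fun_eq_iff A_lam_v_def)
  then show ?thesis
    using Vector_Spaces.linear_compose[OF matrix_vector_mul_linear_gen proj_orth_linear] by simp
qed

lemma A_lam_v_eq_0_imp:
  assumes "A_lam_v A lam v z = 0"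
  shows "A *v z = lam *s z + (cinner v ((A - mat lam) *v z) / cinner v v) *s v"
  using assms by (simp add: A_lam_v_def proj_orth_def matrix_vector_mult_diff_rdistrib
      mat_vector_mult algebra_simps)

lemma orthogonal_pair_independent:
  assumes "v \<noteq> 0" and "z \<noteq> 0" and "cinner v z = 0"
  shows "v \<noteq> z" and "vec.independent {v, z}"
proof -
  show "v \<noteq> z" using assms by auto
  have "v \<notin> vec.span {z}"
  proof
    assume "v \<in> vec.span {z}"
    then obtain k where "v = k *s z" by (auto simp: vec.span_singleton)
    then have "cinner v v = k * cinner v z" by (metis cinner_scale_right)
    then show False using assms by simp
  qed
  then show "vec.independent {v, z}"
    using assms(2) by (simp add: vec.independent_insert vec.independent_empty)
qed

lemma inj_on_A_lam_v:
  assumes "simple_eigenvalue A lam" and "v \<noteq> 0" and "A *v v = lam *s v"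
  shows "inj_on (A_lam_v A lam v) (orth_compl v)"
proof -
  have "z = 0" if "z \<in> orth_compl v" and "A_lam_v A lam v z = 0" for z
  proof (rule ccontr)
    assume "z \<noteq> 0"
    then have "v \<noteq> z" "vec.independent {v, z}"
      using orthogonal_pair_independent[OF assms(2)] that(1) by (auto simp: orth_compl_def)
    then have "[:-lam, 1:]^2 dvd charpoly A"
      using generalized_eigenvector_square_dvd_charpoly assms(3) A_lam_v_eq_0_imp[OF that(2)]
      by blast
    then have "2 \<le> order lam (charpoly A)"
      using charpoly_nonzero[of A] by (simp add: order_divides)
    with assms(1) show False by (simp add: simple_eigenvalue_def)
  qed
  then show ?thesis
    by (simp add: vec.linear_inj_on_iff_eq_0[OF A_lam_v_linear subspace_orth_compl])
qed

lemma A_lam_v_right_inverse: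
  assumes "inj_on (A_lam_v A lam v) (orth_compl v)"
  obtains g where "Vector_Spaces.linear (*s) (*s) g"
    and "\<And>w. w \<in> orth_compl v \<Longrightarrow> g w \<in> orth_compl v \<and> A_lam_v A lam v (g w) = w"
proof -
  text \<open>\<open>L\<close> agrees with \<open>A\<^sub>\<lambda>\<^sub>,\<^sub>v\<close> on \<open>v\<^sup>\<bottom>\<close> and is injective on the whole space, hence onto.\<close>
  define L where "L w = A_lam_v A lam v w + cinner v w *s v" for w
  have lin: "Vector_Spaces.linear (*s) (*s) L"
    using A_lam_v_linear[of A lam v] unfolding L_def[abs_def] Vector_Spaces.linear_iff
    by (simp add: vec.vector_space_axioms cinner_add_right cinner_scale_right vec_eq_iff
        algebra_simps)
  have cinner_L: "cinner v (L w) = cinner v w * cinner v v" for w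
    using A_lam_v_in_orth_compl[of A lam v w]
    by (simp add: L_def orth_compl_def cinner_add_right cinner_scale_right)
  have "inj L"
  proof (rule vec.linear_inj_iff_eq_0[OF lin, THEN iffD2], intro allI impI)
    fix w assume "L w = 0"
    moreover from this have "w \<in> orth_compl v"
      using cinner_L[of w] by (cases "v = 0") (auto simp: orth_compl_def)
    ultimately have "A_lam_v A lam v w = A_lam_v A lam v 0"
      by (simp add: L_def orth_compl_def vec.linear_0[OF A_lam_v_linear])
    then show "w = 0"
      using inj_onD[OF assms] \<open>w \<in> orth_compl v\<close> vec.subspace_0[OF subspace_orth_compl] by blast
  qed
  then obtain g where g: "Vector_Spaces.linear (*s) (*s) g" "L \<circ> g = id"
    using vec.linear_surjective_right_inverse[OF lin vec.linear_inj_imp_surj[OF lin]] by blast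
  have "g w \<in> orth_compl v \<and> A_lam_v A lam v (g w) = w" if "w \<in> orth_compl v" for w
  proof -
    have "L (g w) = w" using g(2) by (simp add: fun_eq_iff)
    then have "g w \<in> orth_compl v"
      using cinner_L[of "g w"] that by (cases "v = 0") (auto simp: orth_compl_def)
    with \<open>L (g w) = w\<close> show ?thesis by (simp add: L_def orth_compl_def)
  qed
  with g(1) show ?thesis using that by blast
qed

lemma A_lam_v_inv_eq:
  assumes "inj_on (A_lam_v A lam v) (orth_compl v)"
    and "\<And>w. w \<in> orth_compl v \<Longrightarrow> g w \<in> orth_compl v \<and> A_lam_v A lam v (g w) = w"
  shows "A_lam_v_inv A lam v = (\<lambda>w. if w \<in> orth_compl v then g w else 0)"
proof -
  have g_A_lam_v: "g (A_lam_v A lam v w) = w" if "w \<in> orth_compl v" for w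
    by (rule inj_onD[OF assms(1)]) (use assms(2)[OF A_lam_v_in_orth_compl] that in auto)
  show ?thesis
    unfolding A_lam_v_inv_def
  proof (rule the_equality)
    show "(\<forall>w\<in>orth_compl v. (if w \<in> orth_compl v then g w else 0) \<in> orth_compl v
        \<and> A_lam_v A lam v (if w \<in> orth_compl v then g w else 0) = w
        \<and> (if A_lam_v A lam v w \<in> orth_compl v then g (A_lam_v A lam v w) else 0) = w)
      \<and> (\<forall>w. w \<notin> orth_compl v \<longrightarrow> (if w \<in> orth_compl v then g w else 0) = 0)"
      using assms(2) g_A_lam_v by (simp add: A_lam_v_in_orth_compl)
  next
    fix B
    assume B: "(\<forall>w\<in>orth_compl v. B w \<in> orth_compl v \<and> A_lam_v A lam v (B w) = w
        \<and> B (A_lam_v A lam v w) = w) \<and> (\<forall>w. w \<notin> orth_compl v \<longrightarrow> B w = 0)"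
    have B_eq_g: "B w = g w" if "w \<in> orth_compl v" for w
    proof (rule inj_onD[OF assms(1)])
      show "B w \<in> orth_compl v" using B that by blast
      show "g w \<in> orth_compl v" using assms(2)[OF that] ..
      have "A_lam_v A lam v (B w) = w" using B that by blast
      then show "A_lam_v A lam v (B w) = A_lam_v A lam v (g w)" using assms(2)[OF that] by simp
    qed
    moreover have "B w = 0" if "w \<notin> orth_compl v" for w
      using B that by blast
    ultimately show "B = (\<lambda>w. if w \<in> orth_compl v then g w else 0)"
      by (simp add: fun_eq_iff)
  qed
qed

section \<open>Operator norm on a subspace\<close>

lemma opnorm_on_cong: "(\<And>w. w \<in> T \<Longrightarrow> B w = B' w) \<Longrightarrow> opnorm_on T B = opnorm_on T B'"
  unfolding opnorm_on_def by (rule arg_cong[where f = Sup]) force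

lemma bdd_above_norm_linear:
  fixes g :: "complex^'n \<Rightarrow> complex^'n"
  assumes "Vector_Spaces.linear (*s) (*s) g"
  shows "bdd_above {norm (g w) | w. w \<in> T \<and> norm w \<le> 1}"
proof (rule bdd_aboveI)
  fix x assume "x \<in> {norm (g w) | w. w \<in> T \<and> norm w \<le> 1}"
  then obtain w where w: "x = norm (g w)" "norm w \<le> 1" by blast
  then have "x \<le> frob_norm (matrix g) * norm w"
    using norm_matrix_vector_mult_le[of "matrix g" w] by (simp add: matrix_works[OF assms])
  also have "\<dots> \<le> frob_norm (matrix g)"
    by (intro mult_left_le w(2) frob_norm_nonneg)
  finally show "x \<le> frob_norm (matrix g)" .
qed

lemma opnorm_on_nonneg:
  fixes g :: "complex^'n \<Rightarrow> complex^'n"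
  assumes "Vector_Spaces.linear (*s) (*s) g" and "0 \<in> T"
  shows "0 \<le> opnorm_on T g"
proof -
  have "norm (g 0) \<le> opnorm_on T g"
    unfolding opnorm_on_def using assms(2) by (intro cSup_upper bdd_above_norm_linear[OF assms(1)]) auto
  then show ?thesis by (simp add: vec.linear_0[OF assms(1)])
qed

lemma norm_le_opnorm_on:
  fixes g :: "complex^'n \<Rightarrow> complex^'n"
  assumes "Vector_Spaces.linear (*s) (*s) g" and "vec.subspace T" and "w \<in> T"
  shows "norm (g w) \<le> opnorm_on T g * norm w"
proof (cases "w = 0")
  case True
  then show ?thesis by (simp add: vec.linear_0[OF assms(1)])
next
  case False
  define c where "c = complex_of_real (1 / norm w)"
  have "c *s w \<in> T \<and> norm (c *s w) \<le> 1"
    using False vec.subspace_scale[OF assms(2,3)] by (simp add: c_def norm_vector_smult norm_divide)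
  then have "norm (g (c *s w)) \<le> opnorm_on T g"
    unfolding opnorm_on_def by (intro cSup_upper bdd_above_norm_linear[OF assms(1)]) blast
  then have "norm (g w) / norm w \<le> opnorm_on T g"
    by (simp add: vec.linear_scale[OF assms(1)] c_def norm_vector_smult norm_divide)
  then show ?thesis using False by (simp add: divide_le_eq)
qed

section \<open>The eigenvalue condition number\<close>

lemma norm_proj_orth_left_eigenvector_le:
  assumes "simple_eigenvalue A lam" and "v \<noteq> 0" and "A *v v = lam *s v"
    and "adjoint_mat A *v u = cnj lam *s u"
  shows "norm (proj_orth v u) \<le> cmod (cinner v u / cinner v v) * norm v * mu A lam v"
proof -
  have inj: "inj_on (A_lam_v A lam v) (orth_compl v)"
    by (rule inj_on_A_lam_v[OF assms(1-3)])
  obtain g where g: "Vector_Spaces.linear (*s) (*s) g"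
    and g_inv: "\<And>w. w \<in> orth_compl v \<Longrightarrow> g w \<in> orth_compl v \<and> A_lam_v A lam v (g w) = w"
    using A_lam_v_right_inverse[OF inj] by blast
  define N where "N = opnorm_on (orth_compl v) g"
  have "opnorm_on (orth_compl v) (A_lam_v_inv A lam v) = N"
    unfolding N_def by (rule opnorm_on_cong) (simp add: A_lam_v_inv_eq[OF inj g_inv])
  then have mu: "mu A lam v = frob_norm A * N"
    by (simp add: mu_def)
  have "0 \<le> mu A lam v"
    unfolding mu N_def
    by (intro mult_nonneg_nonneg frob_norm_nonneg opnorm_on_nonneg[OF g]
        vec.subspace_0[OF subspace_orth_compl])
  define a where "a = cinner v u / cinner v v"
  define w where "w = proj_orth v u"
  define z where "z = g w"
  have "w \<in> orth_compl v" by (simp add: w_def proj_orth_in_orth_compl)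
  then have z: "cinner v z = 0" "A_lam_v A lam v z = w"
    using g_inv by (auto simp: z_def orth_compl_def)
  have "cinner w v = 0"
    using \<open>w \<in> orth_compl v\<close> by (simp add: orth_compl_def cinner_commute[of w v])
  then have "cinner w w = cinner w ((A - mat lam) *v z)"
    using cinner_proj_orth_right[of w v "(A - mat lam) *v z"] z(2) by (simp add: A_lam_v_def)
  also have "\<dots> = cinner u ((A - mat lam) *v z) - cnj a * cinner v ((A - mat lam) *v z)"
    by (simp add: w_def proj_orth_def a_def cinner_diff_left cinner_scale_left)
  also have "\<dots> = - cnj a * cinner v ((A - mat lam) *v z)"
    by (simp add: cinner_left_eigenvector[OF assms(4)])
  also have "cinner v ((A - mat lam) *v z) = cinner v (A *v z)"
    using z(1) by (simp add: matrix_vector_mult_diff_rdistrib mat_vector_mult cinner_diff_right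
        cinner_scale_right)
  finally have "complex_of_real ((norm w)\<^sup>2) = - cnj a * cinner v (A *v z)"
    by (simp add: cinner_self del: of_real_power)
  then have "(norm w)\<^sup>2 = cmod (- cnj a * cinner v (A *v z))"
    by (metis abs_power2 norm_of_real)
  also have "\<dots> = cmod a * cmod (cinner v (A *v z))"
    by (simp add: norm_mult)
  also have "\<dots> \<le> cmod a * (norm v * (frob_norm A * norm z))"
    by (intro mult_left_mono order_trans[OF cinner_Cauchy_Schwarz] norm_matrix_vector_mult_le
        norm_ge_zero)
  also have "\<dots> \<le> cmod a * (norm v * (frob_norm A * (N * norm w)))"
    using norm_le_opnorm_on[OF g subspace_orth_compl \<open>w \<in> orth_compl v\<close>] frob_norm_nonneg
    by (intro mult_left_mono) (simp_all add: z_def N_def)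
  finally have "norm w * norm w \<le> (cmod a * norm v * mu A lam v) * norm w"
    by (simp add: mu power2_eq_square algebra_simps)
  then show ?thesis
    using \<open>0 \<le> mu A lam v\<close> unfolding a_def[symmetric] w_def[symmetric]
    by (cases "norm w = 0") simp_all
qed

lemma cond_le_sqrt_of_norm_proj_orth_le:
  fixes u v :: "complex^'n"
  assumes "v \<noteq> 0" and "norm (proj_orth v u) \<le> cmod (cinner v u / cinner v v) * norm v * m"
  shows "norm u * norm v / cmod (cinner u v) \<le> sqrt (1 + m\<^sup>2)"
proof -
  define a where "a = cinner v u / cinner v v"
  define w where "w = proj_orth v u"
  have u: "u = a *s v + w" by (simp add: a_def w_def proj_orth_def)
  have "cinner v w = 0" using proj_orth_in_orth_compl by (simp add: w_def orth_compl_def)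
  then have "cinner w v = 0" by (simp add: cinner_commute[of w v])
  then have cinner_uv: "cinner u v = cnj a * cinner v v"
    by (simp add: u cinner_add_left cinner_scale_left)
  show ?thesis
  proof (cases "a = 0")
    case True
    then show ?thesis by (simp add: cinner_uv)
  next
    case False
    define D where "D = cmod a * norm v"
    have "D > 0" using False assms(1) by (simp add: D_def)
    have "norm u * norm v / cmod (cinner u v) = norm u / D"
      using assms(1) by (simp add: cinner_uv cinner_self norm_mult D_def power2_eq_square
          del: of_real_power)
    moreover have "(norm u)\<^sup>2 = D\<^sup>2 + (norm w)\<^sup>2"
      unfolding u using \<open>cinner v w = 0\<close>
      by (subst cinner_Pythagoras) (simp_all add: cinner_scale_left norm_vector_smult D_def power_mult_distrib)
    then have "(norm u / D)\<^sup>2 = 1 + (norm w / D)\<^sup>2"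
      using \<open>D > 0\<close> by (simp add: power_divide add_divide_distrib)
    moreover have "norm w / D \<le> m"
      using assms(2) \<open>D > 0\<close> by (simp add: a_def[symmetric] w_def[symmetric] D_def divide_le_eq mult.commute)
    then have "(norm w / D)\<^sup>2 \<le> m\<^sup>2"
      using \<open>D > 0\<close> by (intro power_mono) simp_all
    ultimately show ?thesis by (simp add: real_le_rsqrt)
  qed
qed

theorem lemma3p3:
  fixes A :: "complex ^ 'n ^ 'n" and lam :: complex and u v :: "complex ^ 'n"
  assumes "simple_eigenvalue A lam"
    and "v \<noteq> 0" and "A *v v = lam *s v"
    and "u \<noteq> 0" and "adjoint_mat A *v u = cnj lam *s u"
  shows "norm u * norm v / cmod (cinner u v) \<le> sqrt (1 + (mu A lam v)\<^sup>2)"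
  using cond_le_sqrt_of_norm_proj_orth_le[OF assms(2)
      norm_proj_orth_left_eigenvector_le[OF assms(1-3,5)]] .

end
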